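(* Let $m$ be a positive integer and $G$ a connected, almost asymmetric graph. If $n(G)-\max\{|v^*|:\ v^*\in V(G^* )\}\neq m$, then $D(G)\neq n(G)-m$.
   Context: All graphs are finite and simple; $n(G)=|V(G)|$; $N_G(u)$ is the neighborhood of $u$. A distinguishing coloring of a graph $G$ is a (not necessarily proper) vertex coloring such that the only automorphism of $G$ mapping every vertex to a vertex of the same color is the identity; the distinguishing number $D(G)$ is the minimum number of colors in a distinguishing coloring of $G$. Two distinct vertices $u,v$ are twins if $N_G(u)\setminus\{v\}=N_G(v)\setminus\{u\}$. The relation $u\equiv v$ iff $u=v$ or $u,v$ are twins is an equivalence relation; the class of $v$ is denoted $v^*$. The twin graph $G^*$ has the equivalence classes as vertices, distinct classes $u^*,v^*$ being adjacent iff $uv\in E(G)$. A graph $G$ is almost asymmetric if no automorphism of $G$ maps a vertex of one twin class to a vertex of a different twin class. *)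

theory Defs
  imports Main
begin

definition simple_graph :: "'a set \<Rightarrow> ('a \<Rightarrow> 'a \<Rightarrow> bool) \<Rightarrow> bool" where
  "simple_graph V E \<longleftrightarrow> finite V \<and> (\<forall>u v. E u v \<longrightarrow> u \<in> V \<and> v \<in> V)
     \<and> (\<forall>u v. E u v \<longrightarrow> E v u) \<and> (\<forall>u. \<not> E u u)"

definition connected_graph :: "'a set \<Rightarrow> ('a \<Rightarrow> 'a \<Rightarrow> bool) \<Rightarrow> bool" where
  "connected_graph V E \<longleftrightarrow> V \<noteq> {} \<and> (\<forall>u\<in>V. \<forall>v\<in>V. E\<^sup>*\<^sup>* u v)"

definition nbhd :: "'a set \<Rightarrow> ('a \<Rightarrow> 'a \<Rightarrow> bool) \<Rightarrow> 'a \<Rightarrow> 'a set" where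
  "nbhd V E u = {w \<in> V. E u w}"

definition automorphism :: "'a set \<Rightarrow> ('a \<Rightarrow> 'a \<Rightarrow> bool) \<Rightarrow> ('a \<Rightarrow> 'a) \<Rightarrow> bool" where
  "automorphism V E f \<longleftrightarrow> bij_betw f V V \<and> (\<forall>u\<in>V. \<forall>v\<in>V. E u v \<longleftrightarrow> E (f u) (f v))"

definition distinguishing :: "'a set \<Rightarrow> ('a \<Rightarrow> 'a \<Rightarrow> bool) \<Rightarrow> nat \<Rightarrow> ('a \<Rightarrow> nat) \<Rightarrow> bool" where
  "distinguishing V E k c \<longleftrightarrow> c ` V \<subseteq> {..<k} \<and>
     (\<forall>f. automorphism V E f \<and> (\<forall>v\<in>V. c (f v) = c v) \<longrightarrow> (\<forall>v\<in>V. f v = v))"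

definition distinguishing_number :: "'a set \<Rightarrow> ('a \<Rightarrow> 'a \<Rightarrow> bool) \<Rightarrow> nat" where
  "distinguishing_number V E = (LEAST k. \<exists>c. distinguishing V E k c)"

definition twins :: "'a set \<Rightarrow> ('a \<Rightarrow> 'a \<Rightarrow> bool) \<Rightarrow> 'a \<Rightarrow> 'a \<Rightarrow> bool" where
  "twins V E u v \<longleftrightarrow> u \<noteq> v \<and> nbhd V E u - {v} = nbhd V E v - {u}"

definition twin_class :: "'a set \<Rightarrow> ('a \<Rightarrow> 'a \<Rightarrow> bool) \<Rightarrow> 'a \<Rightarrow> 'a set" where
  "twin_class V E v = {u \<in> V. u = v \<or> twins V E u v}"

definition max_twin_class_size :: "'a set \<Rightarrow> ('a \<Rightarrow> 'a \<Rightarrow> bool) \<Rightarrow> nat" where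
  "max_twin_class_size V E = Max ((\<lambda>v. card (twin_class V E v)) ` V)"

definition almost_asymmetric :: "'a set \<Rightarrow> ('a \<Rightarrow> 'a \<Rightarrow> bool) \<Rightarrow> bool" where
  "almost_asymmetric V E \<longleftrightarrow>
     (\<forall>f. automorphism V E f \<longrightarrow> (\<forall>v\<in>V. f v \<in> twin_class V E v))"

end

theory Submission
  imports Defs
begin

text \<open>Swapping two twins is an automorphism, so any distinguishing colouring is injective on
every twin class and needs at least \<open>max |v*|\<close> colours. Conversely, in an almost asymmetric
graph automorphisms map each twin class to itself, so colouring every class injectively with
\<open>max |v*|\<close> colours is distinguishing. Hence \<open>D(G) = max |v*|\<close>, and the corollary is
arithmetic.\<close>

lemma twins_iff:
  assumes "simple_graph V E"
  shows "twins V E u v \<longleftrightarrow> u \<noteq> v \<and> (\<forall>z. z \<noteq> u \<and> z \<noteq> v \<longrightarrow> (E u z \<longleftrightarrow> E v z))"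
proof -
  have s: "\<And>a b. E a b \<Longrightarrow> a \<in> V \<and> b \<in> V" "\<And>a. \<not> E a a"
    using assms unfolding simple_graph_def by blast+
  show ?thesis
    unfolding twins_def nbhd_def set_eq_iff
  proof
    assume h: "u \<noteq> v \<and> (\<forall>x. (x \<in> {w \<in> V. E u w} - {v}) = (x \<in> {w \<in> V. E v w} - {u}))"
    have "E u z = E v z" if z: "z \<noteq> u \<and> z \<noteq> v" for z
      using h[THEN conjunct2, rule_format, of z] z s by blast
    then show "u \<noteq> v \<and> (\<forall>z. z \<noteq> u \<and> z \<noteq> v \<longrightarrow> E u z = E v z)"
      using h by blast
  next
    assume h: "u \<noteq> v \<and> (\<forall>z. z \<noteq> u \<and> z \<noteq> v \<longrightarrow> E u z = E v z)"
    have "(x \<in> {w \<in> V. E u w} - {v}) = (x \<in> {w \<in> V. E v w} - {u})" for x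
      using h s by (cases "x = u"; cases "x = v") auto
    then show "u \<noteq> v \<and> (\<forall>x. (x \<in> {w \<in> V. E u w} - {v}) = (x \<in> {w \<in> V. E v w} - {u}))"
      using h by blast
  qed
qed

lemma twins_sym:
  assumes "simple_graph V E" "twins V E u v"
  shows "twins V E v u"
  using assms by (auto simp: twins_iff)

lemma twins_trans:
  assumes g: "simple_graph V E" and uv: "twins V E u v" and vw: "twins V E v w" and "u \<noteq> w"
  shows "twins V E u w"
proof -
  have sym: "\<And>a b. E a b \<Longrightarrow> E b a"
    using g unfolding simple_graph_def by blast
  have 1: "\<forall>z. z \<noteq> u \<and> z \<noteq> v \<longrightarrow> (E u z \<longleftrightarrow> E v z)" "u \<noteq> v"
    using uv by (auto simp: twins_iff[OF g])
  have 2: "\<forall>z. z \<noteq> v \<and> z \<noteq> w \<longrightarrow> (E v z \<longleftrightarrow> E w z)" "v \<noteq> w"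
    using vw by (auto simp: twins_iff[OF g])
  have "E u v \<longleftrightarrow> E w v"
    using 1(1)[rule_format, of w] 2(1)[rule_format, of u] 1(2) 2(2) \<open>u \<noteq> w\<close> sym by blast
  then show ?thesis
    using 1 2 \<open>u \<noteq> w\<close> by (auto simp: twins_iff[OF g])
qed

lemma twin_class_subset: "twin_class V E v \<subseteq> V"
  unfolding twin_class_def by blast

lemma in_twin_class_self: "v \<in> V \<Longrightarrow> v \<in> twin_class V E v"
  unfolding twin_class_def by blast

lemma twin_class_eq:
  assumes "simple_graph V E" "x \<in> twin_class V E v"
  shows "twin_class V E x = twin_class V E v"
  using assms twins_sym[OF assms(1)] twins_trans[OF assms(1)] unfolding twin_class_def by blast

lemma twins_if_in_twin_class:
  assumes "simple_graph V E" "x \<in> twin_class V E v" "y \<in> twin_class V E v" "x \<noteq> y"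
  shows "twins V E x y"
  using assms twins_sym[OF assms(1)] twins_trans[OF assms(1)] unfolding twin_class_def by blast

lemma automorphism_swap_twins:
  assumes g: "simple_graph V E" and tw: "twins V E x y" and "x \<in> V" "y \<in> V"
  shows "automorphism V E (\<lambda>z. if z = x then y else if z = y then x else z)"
proof -
  let ?f = "\<lambda>z. if z = x then y else if z = y then x else z"
  have sym: "\<And>a b. E a b \<longleftrightarrow> E b a" and irr: "\<And>a. \<not> E a a"
    using g unfolding simple_graph_def by blast+
  have "x \<noteq> y" and tx: "\<And>z. z \<noteq> x \<Longrightarrow> z \<noteq> y \<Longrightarrow> E x z \<longleftrightarrow> E y z"
    using tw by (auto simp: twins_iff[OF g])
  then have xt: "\<And>z. z \<noteq> x \<Longrightarrow> z \<noteq> y \<Longrightarrow> E z x \<longleftrightarrow> E z y"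
    using sym by blast
  have "bij_betw ?f V V"
    by (rule bij_betw_byWitness[where f' = ?f]) (use \<open>x \<in> V\<close> \<open>y \<in> V\<close> in auto)
  moreover have "E u v \<longleftrightarrow> E (?f u) (?f v)" for u v
    using tx xt sym[of x y] irr \<open>x \<noteq> y\<close>
    by (cases "u = x"; cases "u = y"; cases "v = x"; cases "v = y") simp_all
  ultimately show ?thesis
    unfolding automorphism_def by blast
qed

lemma distinguishing_inj_on_twin_class:
  assumes g: "simple_graph V E" and d: "distinguishing V E k c"
  shows "inj_on c (twin_class V E v)"
proof (rule inj_onI, rule ccontr)
  fix x y
  assume x: "x \<in> twin_class V E v" and y: "y \<in> twin_class V E v" and "c x = c y" "x \<noteq> y"
  have V: "x \<in> V" "y \<in> V"
    using x y by (simp_all add: twin_class_def)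
  let ?f = "\<lambda>z. if z = x then y else if z = y then x else z"
  have "automorphism V E ?f"
    using automorphism_swap_twins[OF g twins_if_in_twin_class[OF g x y \<open>x \<noteq> y\<close>] V] .
  moreover have "\<forall>z\<in>V. c (?f z) = c z"
    using \<open>c x = c y\<close> by simp
  moreover have "\<forall>f. automorphism V E f \<and> (\<forall>z\<in>V. c (f z) = c z) \<longrightarrow> (\<forall>z\<in>V. f z = z)"
    using d unfolding distinguishing_def by (rule conjunct2)
  ultimately have "?f x = x"
    using V(1) by blast
  then show False
    using \<open>x \<noteq> y\<close> by simp
qed

lemma card_twin_class_le_colours:
  assumes g: "simple_graph V E" and d: "distinguishing V E k c"
  shows "card (twin_class V E v) \<le> k"
proof -
  have "card (twin_class V E v) = card (c ` twin_class V E v)"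
    using card_image[OF distinguishing_inj_on_twin_class[OF g d]] by simp
  also have "\<dots> \<le> card {..<k}"
    using d twin_class_subset[of V E v] unfolding distinguishing_def
    by (intro card_mono) auto
  finally show ?thesis
    by simp
qed

definition rank_in :: "'a set \<Rightarrow> ('a \<Rightarrow> nat) \<Rightarrow> 'a \<Rightarrow> nat" where
  "rank_in C r a = card {u \<in> C. r u < r a}"

lemma rank_in_less_card:
  assumes "finite C" "a \<in> C"
  shows "rank_in C r a < card C"
proof -
  have "{u \<in> C. r u < r a} \<subset> C"
    using assms(2) by blast
  then show ?thesis
    unfolding rank_in_def using assms(1) by (rule psubset_card_mono[rotated])
qed

lemma rank_in_strict_mono:
  assumes "finite C" "a \<in> C" "r a < r b"
  shows "rank_in C r a < rank_in C r b"
proof -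
  have "{u \<in> C. r u < r a} \<subset> {u \<in> C. r u < r b}"
    using assms(2,3) by auto
  then show ?thesis
    unfolding rank_in_def using assms(1) by (intro psubset_card_mono) auto
qed

lemma inj_on_rank_in:
  assumes "finite C" "inj_on r C"
  shows "inj_on (rank_in C r) C"
proof (rule inj_onI, rule ccontr)
  fix a b
  assume ab: "a \<in> C" "b \<in> C" "rank_in C r a = rank_in C r b" "a \<noteq> b"
  then have "r a < r b \<or> r b < r a"
    using assms(2) by (metis inj_onD linorder_neqE_nat)
  then show False
    using rank_in_strict_mono[OF assms(1)] ab(1-3) by (metis less_irrefl)
qed

lemma distinguishing_rank_in_twin_class:
  assumes g: "simple_graph V E" and aa: "almost_asymmetric V E" and r: "inj_on r V"
  shows "distinguishing V E (max_twin_class_size V E) (\<lambda>v. rank_in (twin_class V E v) r v)"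
    (is "distinguishing V E ?M ?c")
proof -
  have fin: "finite V"
    using g unfolding simple_graph_def by blast
  have finC: "finite (twin_class V E v)" for v
    using finite_subset[OF twin_class_subset fin] .
  have "?c v < ?M" if "v \<in> V" for v
  proof -
    have "?c v < card (twin_class V E v)"
      using rank_in_less_card[OF finC in_twin_class_self[OF that]] .
    also have "\<dots> \<le> ?M"
      unfolding max_twin_class_size_def using fin that by (intro Max_ge) auto
    finally show ?thesis .
  qed
  moreover have "f v = v"
    if f: "automorphism V E f" "\<forall>v\<in>V. ?c (f v) = ?c v" and v: "v \<in> V" for f v
  proof -
    let ?C = "twin_class V E v"
    have fv: "f v \<in> ?C"
      using aa f(1) v unfolding almost_asymmetric_def by blast
    have "inj_on (rank_in ?C r) ?C"
      using inj_on_rank_in[OF finC inj_on_subset[OF r twin_class_subset]] .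
    moreover have "rank_in ?C r (f v) = rank_in ?C r v"
      using bspec[OF f(2) v] by (simp only: twin_class_eq[OF g fv])
    ultimately show ?thesis
      using fv in_twin_class_self[OF v, of E] by (rule inj_onD)
  qed
  ultimately show ?thesis
    unfolding distinguishing_def by blast
qed

theorem distinguishing_number_almost_asymmetric:
  assumes g: "simple_graph V E" and "V \<noteq> {}" and aa: "almost_asymmetric V E"
  shows "distinguishing_number V E = max_twin_class_size V E"
proof -
  have fin: "finite V"
    using g unfolding simple_graph_def by blast
  obtain r :: "'a \<Rightarrow> nat" and n where "inj_on r V"
    using finite_imp_inj_to_nat_seg[OF fin] by blast
  then have "\<exists>c. distinguishing V E (max_twin_class_size V E) c"
    using distinguishing_rank_in_twin_class[OF g aa] by blast
  moreover have "max_twin_class_size V E \<le> k" if "distinguishing V E k c" for k c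
    unfolding max_twin_class_size_def
    using card_twin_class_le_colours[OF g that] fin \<open>V \<noteq> {}\<close> by (simp add: Max_le_iff)
  ultimately show ?thesis
    unfolding distinguishing_number_def by (intro Least_equality) blast+
qed

lemma max_twin_class_size_le_card:
  assumes "finite V" "V \<noteq> {}"
  shows "max_twin_class_size V E \<le> card V"
  unfolding max_twin_class_size_def
  using assms card_mono[OF assms(1) twin_class_subset] by auto

theorem corollary4p4:
  fixes V :: "'a set" and E :: "'a \<Rightarrow> 'a \<Rightarrow> bool" and m :: nat
  assumes "m > 0"
    and "simple_graph V E"
    and "connected_graph V E"
    and "almost_asymmetric V E"
    and "card V - max_twin_class_size V E \<noteq> m"
  shows "int (distinguishing_number V E) \<noteq> int (card V) - int m"
  \<comment> \<open>Connectivity is only needed for \<open>V \<noteq> {}\<close>.\<close>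
proof -
  have "finite V" "V \<noteq> {}"
    using assms(2,3) unfolding simple_graph_def connected_graph_def by blast+
  then have "max_twin_class_size V E \<le> card V"
    by (rule max_twin_class_size_le_card)
  then show ?thesis
    using assms(5) distinguishing_number_almost_asymmetric[OF assms(2) \<open>V \<noteq> {}\<close> assms(4)]
    by linarith
qed

end
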